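(* Let $R$ be a ring with identity and involution $*$, and let $a,b\in R$ with $a$ group invertible. The following are equivalent: (1) $a$ is core invertible with core inverse $b$; (2) $aba=a$, $ab^2=b$, $(ab)^*=ab$; (3) $bab=b$, $ba^2=a$, $(ab)^*=ab$.
   Context: An involution on $R$ satisfies $(a^* )^*=a$, $(ab)^*=b^*a^*$, $(a+b)^*=a^*+b^*$. An element $x\in R$ is a core inverse of $a$ if $axa=a$, $xR=aR$ and $Rx=Ra^*$; it is unique when it exists. $a$ is group invertible if there is $c\in R$ with $aca=a$, $cac=c$, $ac=ca$. *)

theory Defs
  imports Main
begin

definition involution :: "('a::ring_1 \<Rightarrow> 'a) \<Rightarrow> bool" where
  "involution s \<longleftrightarrow> (\<forall>a. s (s a) = a) \<and> (\<forall>a b. s (a * b) = s b * s a)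
     \<and> (\<forall>a b. s (a + b) = s a + s b)"

definition rprinc :: "'a::ring_1 \<Rightarrow> 'a set" where
  "rprinc x = {x * r | r. True}"

definition lprinc :: "'a::ring_1 \<Rightarrow> 'a set" where
  "lprinc x = {r * x | r. True}"

definition is_core_inverse :: "('a::ring_1 \<Rightarrow> 'a) \<Rightarrow> 'a \<Rightarrow> 'a \<Rightarrow> bool" where
  "is_core_inverse s a x \<longleftrightarrow> a * x * a = a \<and> rprinc x = rprinc a \<and> lprinc x = lprinc (s a)"

definition group_invertible :: "'a::ring_1 \<Rightarrow> bool" where
  "group_invertible a \<longleftrightarrow> (\<exists>c. a * c * a = a \<and> c * a * c = c \<and> a * c = c * a)"

end

theory Submission
  imports Defs
begin

text \<open>Group invertibility enters only through \<open>a \<in> Ra\<^sup>2\<close> and \<open>a \<in> a\<^sup>2R\<close>, which let one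
  pass between the right-sided identities \<open>aba = a, ab\<^sup>2 = b\<close> and the left-sided ones
  \<open>bab = b, ba\<^sup>2 = a\<close>. Given both, \<open>b = a b\<^sup>2\<close> and \<open>a = b a\<^sup>2\<close> show \<open>bR = aR\<close>, and
  hermitian \<open>ab\<close> gives \<open>b = b (ab)\<^sup>* = b b\<^sup>* a\<^sup>*\<close> and \<open>a\<^sup>* = (aba)\<^sup>* = a\<^sup>* a b\<close>, i.e.
  \<open>Rb = Ra\<^sup>*\<close>. Conversely, writing \<open>b = t a\<^sup>*\<close> yields \<open>b = b (ab)\<^sup>*\<close>, so
  \<open>ab = ab (ab)\<^sup>*\<close> is hermitian.\<close>

lemma rprinc_eq_iff:
  "rprinc x = rprinc y \<longleftrightarrow> (\<exists>u. x = y * u) \<and> (\<exists>v. y = x * v)"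
proof
  assume eq: "rprinc x = rprinc y"
  have "x \<in> rprinc y" "y \<in> rprinc x"
    using eq unfolding rprinc_def by (metis (mono_tags) mem_Collect_eq mult_1_right)+
  then show "(\<exists>u. x = y * u) \<and> (\<exists>v. y = x * v)"
    unfolding rprinc_def by auto
next
  assume "(\<exists>u. x = y * u) \<and> (\<exists>v. y = x * v)"
  then show "rprinc x = rprinc y"
    unfolding rprinc_def by (auto simp: mult.assoc[symmetric]) (metis mult.assoc)+
qed

lemma lprinc_eq_iff:
  "lprinc x = lprinc y \<longleftrightarrow> (\<exists>u. x = u * y) \<and> (\<exists>v. y = v * x)"
proof
  assume eq: "lprinc x = lprinc y"
  have "x \<in> lprinc y" "y \<in> lprinc x"
    using eq unfolding lprinc_def by (metis (mono_tags) mem_Collect_eq mult_1_left)+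
  then show "(\<exists>u. x = u * y) \<and> (\<exists>v. y = v * x)"
    unfolding lprinc_def by auto
next
  assume "(\<exists>u. x = u * y) \<and> (\<exists>v. y = v * x)"
  then show "lprinc x = lprinc y"
    unfolding lprinc_def by (auto simp: mult.assoc) (metis mult.assoc)+
qed

lemma involution_involutive: "involution s \<Longrightarrow> s (s x) = x"
  unfolding involution_def by blast

lemma involution_mult: "involution s \<Longrightarrow> s (x * y) = s y * s x"
  unfolding involution_def by blast

lemma group_invertible_square_factors:
  assumes "group_invertible a"
  obtains c where "c * a * a = a" and "a * a * c = a"
proof -
  obtain c where "a * c * a = a" and "a * c = c * a"
    using assms unfolding group_invertible_def by blast
  then have "c * a * a = a" and "a * a * c = a"
    by (metis mult.assoc)+
  then show thesis by (rule that)
qed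

lemma aba_abb_imp_bab_baa:
  fixes a b c :: "'a::monoid_mult"
  assumes caa: "c * a * a = a" and aba: "a * b * a = a" and abb: "a * b ^ 2 = b"
  shows "b * a * b = b" and "b * a ^ 2 = a"
proof -
  have b: "b = c * a * b"
    using caa abb by (metis mult.assoc power2_eq_square)
  show "b * a * b = b"
    using b aba by (metis mult.assoc)
  show "b * a ^ 2 = a"
    using b aba caa by (metis mult.assoc power2_eq_square)
qed

lemma bab_baa_imp_aba_abb:
  fixes a b c :: "'a::monoid_mult"
  assumes aac: "a * a * c = a" and bab: "b * a * b = b" and baa: "b * a ^ 2 = a"
  shows "a * b * a = a" and "a * b ^ 2 = b"
proof -
  have ba: "b * a = a * c"
    using aac baa by (metis mult.assoc power2_eq_square)
  show aba: "a * b * a = a"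
    using ba aac by (metis mult.assoc)
  have b: "b = a * c * b"
    using bab ba by simp
  show "a * b ^ 2 = b"
    using b aba by (metis mult.assoc power2_eq_square)
qed

lemma is_core_inverse_imp_equations:
  assumes s: "involution s" and core: "is_core_inverse s a b"
  shows "a * b * a = a" and "a * b ^ 2 = b" and "s (a * b) = a * b"
proof -
  show aba: "a * b * a = a"
    using core unfolding is_core_inverse_def by blast
  obtain r where r: "b = a * r"
    using core unfolding is_core_inverse_def rprinc_eq_iff by blast
  obtain t where t: "b = t * s a"
    using core unfolding is_core_inverse_def lprinc_eq_iff by blast
  have "s a = s a * s b * s a"
    using aba involution_mult[OF s] by (metis mult.assoc)
  then have b: "b = b * s (a * b)"
    using t involution_mult[OF s] by (metis mult.assoc)
  then have ab: "a * b = a * b * s (a * b)"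
    by (metis mult.assoc)
  have "s (a * b) = s (a * b * s (a * b))"
    using ab by simp
  also have "\<dots> = a * b * s (a * b)"
    using involution_mult[OF s] involution_involutive[OF s] by (simp add: mult.assoc)
  finally show "s (a * b) = a * b"
    using ab by simp
  show "a * b ^ 2 = b"
    using aba r by (metis mult.assoc power2_eq_square)
qed

lemma equations_imp_is_core_inverse:
  assumes s: "involution s"
    and aba: "a * b * a = a" and abb: "a * b ^ 2 = b"
    and bab: "b * a * b = b" and baa: "b * a ^ 2 = a"
    and herm: "s (a * b) = a * b"
  shows "is_core_inverse s a b"
proof -
  have "rprinc b = rprinc a"
    unfolding rprinc_eq_iff using abb baa by (metis mult.assoc power2_eq_square)
  moreover have "lprinc b = lprinc (s a)"
  proof -
    have "b = b * s b * s a"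
      using bab herm involution_mult[OF s] by (metis mult.assoc)
    moreover have "s a = s a * a * b"
      using aba herm involution_mult[OF s] by (metis mult.assoc)
    ultimately show ?thesis
      unfolding lprinc_eq_iff by blast
  qed
  ultimately show ?thesis
    using aba unfolding is_core_inverse_def by blast
qed

theorem corollary3p7:
  fixes s :: "'a::ring_1 \<Rightarrow> 'a" and a b :: 'a
  assumes "involution s"
    and "group_invertible a"
  shows "(is_core_inverse s a b
          \<longleftrightarrow> (a * b * a = a \<and> a * b ^ 2 = b \<and> s (a * b) = a * b))
       \<and> ((a * b * a = a \<and> a * b ^ 2 = b \<and> s (a * b) = a * b)
          \<longleftrightarrow> (b * a * b = b \<and> b * a ^ 2 = a \<and> s (a * b) = a * b))"
proof -
  obtain c where caa: "c * a * a = a" and aac: "a * a * c = a"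
    using assms(2) by (rule group_invertible_square_factors)
  have right_iff_left:
    "a * b * a = a \<and> a * b ^ 2 = b \<longleftrightarrow> b * a * b = b \<and> b * a ^ 2 = a"
    using aba_abb_imp_bab_baa[OF caa] bab_baa_imp_aba_abb[OF aac] by blast
  then show ?thesis
    using is_core_inverse_imp_equations[OF assms(1)]
      equations_imp_is_core_inverse[OF assms(1)] by blast
qed

end
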